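(* Let $q=27/25$ and $\Delta=6$. The function $t\mapsto \big(g_2(e^t)\big)^q$ is concave on the interval $\big[\ln(3/4),\ \ln\big(1-\frac{1}{(2^{\Delta-1}+1)^2}\big)\big]$.
   Context: $h(t)=(1-t)\left[\psi-\left(\frac{t}{1-t}\right)^{\chi}\right]$ with $\psi=13/10$, $\chi=1/2$, and $g_2(y)=\frac{1-y}{y}\,h\big((1-y)^{1/2}\big)$. *)

theory Defs
  imports "HOL-Analysis.Analysis"
begin

definition psi :: real where "psi = 13/10"
definition chi :: real where "chi = 1/2"

definition h :: "real \<Rightarrow> real" where
  "h t = (1 - t) * (psi - (t / (1 - t)) powr chi)"

definition g2 :: "real \<Rightarrow> real" where
  "g2 y = (1 - y) / y * h ((1 - y) powr (1/2))"

end

theory Submission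
  imports Defs
begin

text \<open>Put s = sqrt (1 - e^t) and r = sqrt (s / (1 - s)), the arguments of the two square
  roots in g2 and h. Then e^t = (1 + 2 r^2) / (1 + r^2)^2 and
  g2 (e^t) = r^4 (13/10 - r) / ((1 + r^2) (1 + 2 r^2)) are rational in r, and r decreases in t,
  staying in [22/125, 1] on the interval. So the derivative of g2 (e^t) powr q is a function of
  r alone, and concavity amounts to this function being nondecreasing on [22/125, 1]. Its
  r-derivative is a positive factor times -P(r) for a polynomial P of degree 10, and -P is
  nonnegative there because its Bernstein coefficients on [22/125, 1] are all positive.\<close>

lemma concave_on_real_deriv_comp:
  fixes F D \<phi> :: "real \<Rightarrow> real"
  assumes "connected A"
    and "\<And>t. t \<in> A \<Longrightarrow> (F has_real_derivative D (\<phi> t)) (at t)"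
    and "antimono_on A \<phi>" and "mono_on (\<phi> ` A) D"
  shows "concave_on A F"
  unfolding concave_on_def
proof (rule convex_on_realI[where f' = "\<lambda>t. - D (\<phi> t)"])
  show "connected A" by fact
  show "((\<lambda>t. - F t) has_real_derivative - D (\<phi> t)) (at t)" if "t \<in> A" for t
    using assms(2)[OF that] by (rule DERIV_minus)
  show "- D (\<phi> x) \<le> - D (\<phi> y)" if "x \<in> A" "y \<in> A" "x \<le> y" for x y
    using that assms(3,4) by (simp add: monotone_on_def)
qed

definition den :: "real \<Rightarrow> real" where
  "den r = (1 + r^2) * (1 + 2 * r^2)"

lemma den_pos: "0 < den r"
  unfolding den_def by (intro mult_pos_pos add_pos_nonneg) auto

lemma den_deriv: "(den has_real_derivative 6 * r + 8 * r^3) (at r)"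
  unfolding den_def[abs_def]
  by (rule derivative_eq_intros refl)+ (simp add: algebra_simps eval_nat_numeral)

definition tau :: "real \<Rightarrow> real" where
  "tau r = ln (1 + 2 * r^2) - 2 * ln (1 + r^2)"

definition rad :: "real \<Rightarrow> real" where
  "rad t = sqrt (sqrt (1 - exp t) / (1 - sqrt (1 - exp t)))"

lemma exp_tau: "exp (tau r) = (1 + 2 * r^2) / (1 + r^2)^2"
proof -
  have "0 < 1 + r^2" "0 < 1 + 2 * r^2" by (simp_all add: add_pos_nonneg)
  then show ?thesis
    using exp_of_nat_mult[of 2 "ln (1 + r^2)"] by (simp add: tau_def exp_diff)
qed

lemma tau_deriv: "(tau has_real_derivative - 4 * r^3 / den r) (at r)"
proof -
  have pos: "0 < 1 + r^2" "0 < 1 + 2 * r^2" by (simp_all add: add_pos_nonneg)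
  have "(tau has_real_derivative 4 * r / (1 + 2 * r^2) - 2 * (2 * r / (1 + r^2))) (at r)"
    unfolding tau_def[abs_def] using pos
    by (auto intro!: derivative_eq_intros simp: eval_nat_numeral)
  moreover have "4 * r / (1 + 2 * r^2) - 2 * (2 * r / (1 + r^2)) = - 4 * r^3 / den r"
    using pos unfolding den_def by (simp add: field_simps eval_nat_numeral)
  ultimately show ?thesis by simp
qed

lemma rad_pos: "t < 0 \<Longrightarrow> 0 < rad t"
  by (simp add: rad_def)

lemma tau_rad:
  assumes "t < 0"
  shows "tau (rad t) = t"
proof -
  define s where "s = sqrt (1 - exp t)"
  have s: "0 < s" "s < 1" "s^2 = 1 - exp t" using assms by (auto simp: s_def)
  have r2: "rad t ^ 2 = s / (1 - s)" using s by (simp add: rad_def s_def)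
  have "exp (tau (rad t)) = 1 - s^2"
    using s unfolding exp_tau r2 by (simp add: field_simps; algebra)
  then show ?thesis using s by simp
qed

lemma rad_deriv:
  assumes "t < 0"
  shows "(rad has_real_derivative - den (rad t) / (4 * rad t ^ 3)) (at t)"
proof -
  have "(rad has_real_derivative inverse (- 4 * rad t ^ 3 / den (rad t))) (at t)"
  proof (rule DERIV_inverse_function[where f = tau and a = "t - 1" and b = 0])
    show "(tau has_real_derivative - 4 * rad t ^ 3 / den (rad t)) (at (rad t))"
      by (rule tau_deriv)
    show "- 4 * rad t ^ 3 / den (rad t) \<noteq> 0"
      using rad_pos[OF assms] den_pos[of "rad t"] by simp
    show "isCont rad t"
      unfolding rad_def using assms by (intro continuous_intros) auto
  qed (use assms tau_rad in auto)
  then show ?thesis by simp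
qed

lemma rad_antimono: "antimono_on {..<0} rad"
proof (rule monotone_onI)
  fix a b :: real
  assume "a \<in> {..<0}" "b \<in> {..<0}" "a \<le> b"
  show "rad b \<le> rad a"
  proof (rule DERIV_nonpos_imp_nonincreasing[OF \<open>a \<le> b\<close>])
    fix t assume "a \<le> t" "t \<le> b"
    with \<open>b \<in> {..<0}\<close> have "t < 0" by simp
    have "- den (rad t) / (4 * rad t ^ 3) \<le> 0"
      using rad_pos[OF \<open>t < 0\<close>] den_pos[of "rad t"] by (simp add: divide_nonneg_pos)
    with rad_deriv[OF \<open>t < 0\<close>]
    show "\<exists>y. (rad has_real_derivative y) (at t) \<and> y \<le> 0" by blast
  qed
qed

lemma bounds_from_tau:
  assumes "0 \<le> r" "ln (3/4) \<le> tau r" "tau r \<le> ln (1088/1089)"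
  shows "22/125 \<le> r" "r \<le> 1"
proof -
  have pos: "0 < 1 + r^2" "0 < 1 + 2 * r^2" by (simp_all add: add_pos_nonneg)
  have "3/4 \<le> exp (tau r)" "exp (tau r) \<le> 1088/1089"
    using assms(2,3) exp_le_cancel_iff[of "ln (3/4)" "tau r"]
      exp_le_cancel_iff[of "tau r" "ln (1088/1089)"] by simp_all
  then have "3 * (1 + r^2)^2 \<le> 4 * (1 + 2 * r^2)" "1089 * (1 + 2 * r^2) \<le> 1088 * (1 + r^2)^2"
    using pos unfolding exp_tau by (simp_all add: field_simps)
  then have "(3 * r^2 + 1) * (r^2 - 1) \<le> 0" "0 \<le> (34 * r^2 + 1) * (32 * r^2 - 1)"
    by (simp_all add: algebra_simps power2_eq_square)
  then have "r^2 \<le> 1" "1/32 \<le> r^2"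
    using zero_le_power2[of r] by (auto simp: mult_le_0_iff zero_le_mult_iff)
  moreover have "(22/125)^2 \<le> (1/32 :: real)" by (simp add: power2_eq_square)
  ultimately have "r^2 \<le> 1" "(22/125)^2 \<le> r^2" by linarith+
  then show "22/125 \<le> r" "r \<le> 1"
    using assms(1) by (auto intro: power2_le_imp_le simp: power_le_one_iff)
qed

definition g2_rad :: "real \<Rightarrow> real" where
  "g2_rad r = r^4 * (13/10 - r) / den r"

definition dg2_poly :: "real \<Rightarrow> real" where
  "dg2_poly r = 26/5 - 5 * r + 39/5 * r^2 - 9 * r^3 - 2 * r^5"

lemma g2_rad_pos: "0 < r \<Longrightarrow> r < 13/10 \<Longrightarrow> 0 < g2_rad r"
  unfolding g2_rad_def using den_pos[of r] by simp

lemma g2_rad_deriv: "(g2_rad has_real_derivative r^3 * dg2_poly r / den r ^ 2) (at r)"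
proof -
  have "(g2_rad has_real_derivative
      ((4 * r^3 * (13/10 - r) - r^4) * den r - r^4 * (13/10 - r) * (6 * r + 8 * r^3)) / (den r * den r)) (at r)"
    unfolding g2_rad_def[abs_def] using den_pos[of r]
    by (intro DERIV_divide den_deriv) (auto intro!: derivative_eq_intros simp: eval_nat_numeral algebra_simps)
  moreover have "(4 * r^3 * (13/10 - r) - r^4) * den r - r^4 * (13/10 - r) * (6 * r + 8 * r^3)
      = r^3 * dg2_poly r"
    unfolding den_def dg2_poly_def by algebra
  ultimately show ?thesis by (simp add: power2_eq_square)
qed

lemma g2_exp_tau:
  assumes "0 \<le> r"
  shows "g2 (exp (tau r)) = g2_rad r"
proof -
  have pos: "0 < 1 + r^2" "0 < 1 + 2 * r^2" by (simp_all add: add_pos_nonneg)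
  have sqrt_one_minus: "(1 - exp (tau r)) powr (1/2) = r^2 / (1 + r^2)"
  proof -
    have "1 - exp (tau r) = (r^2 / (1 + r^2))^2"
      using pos unfolding exp_tau by (simp add: field_simps; algebra)
    then show ?thesis using pos by (simp add: powr_half_sqrt)
  qed
  have ratio: "(r^2 / (1 + r^2) / (1 - r^2 / (1 + r^2))) powr chi = r"
  proof -
    have "r^2 / (1 + r^2) / (1 - r^2 / (1 + r^2)) = r^2" using pos by (simp add: field_simps)
    then show ?thesis using assms by (simp add: chi_def powr_half_sqrt)
  qed
  have "g2 (exp (tau r))
      = (1 - exp (tau r)) / exp (tau r) * ((1 - r^2 / (1 + r^2)) * (13/10 - r))"
    unfolding g2_def h_def sqrt_one_minus ratio psi_def ..
  also have "\<dots> = r^4 / (1 + 2 * r^2) * (1 / (1 + r^2) * (13/10 - r))"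
  proof -
    have "1 - exp (tau r) = r^4 / (1 + r^2)^2"
      using pos unfolding exp_tau by (simp add: field_simps; algebra)
    moreover have "1 - r^2 / (1 + r^2) = 1 / (1 + r^2)"
      using pos by (simp add: field_simps)
    ultimately show ?thesis using pos unfolding exp_tau by simp
  qed
  also have "\<dots> = g2_rad r"
    unfolding g2_rad_def den_def by simp
  finally show ?thesis .
qed

definition dg2_dt :: "real \<Rightarrow> real" where
  "dg2_dt r = - dg2_poly r / (4 * den r)"

definition slope :: "real \<Rightarrow> real" where
  "slope r = 27/25 * g2_rad r powr (2/25) * dg2_dt r"

definition dg2_poly' :: "real \<Rightarrow> real" where
  "dg2_poly' r = -5 + 78/5 * r - 27 * r^2 - 10 * r^4"

lemma dg2_poly_deriv: "(dg2_poly has_real_derivative dg2_poly' r) (at r)"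
  unfolding dg2_poly_def[abs_def] dg2_poly'_def
  by (rule derivative_eq_intros refl)+ (simp add: algebra_simps eval_nat_numeral)

lemma dg2_dt_deriv:
  "(dg2_dt has_real_derivative
     - (dg2_poly' r * den r - dg2_poly r * (6 * r + 8 * r^3)) / (4 * den r ^ 2)) (at r)"
proof -
  have "4 * den r \<noteq> 0" using den_pos[of r] by simp
  from DERIV_minus[OF DERIV_divide[OF dg2_poly_deriv DERIV_cmult[OF den_deriv, of 4] this]]
  show ?thesis unfolding dg2_dt_def[abs_def] minus_divide_left[symmetric]
    by (rule DERIV_cong) (use den_pos[of r] in \<open>simp add: field_simps power2_eq_square\<close>)
qed

lemma g2_exp_powr_deriv:
  assumes "t < 0" "rad t < 13/10"
  shows "((\<lambda>t. g2 (exp t) powr (27/25)) has_real_derivative slope (rad t)) (at t)"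
proof -
  have near: "\<forall>\<^sub>F t' in nhds t. g2 (exp t') powr (27/25) = g2_rad (rad t') powr (27/25)"
    using eventually_nhds_in_open[of "{..<0}" t] assms(1)
    by (auto elim!: eventually_mono simp: g2_exp_tau[symmetric] tau_rad less_imp_le rad_pos)
  have pos: "0 < g2_rad (rad t)" using g2_rad_pos rad_pos assms by blast
  have "((\<lambda>t. g2_rad (rad t)) has_real_derivative dg2_dt (rad t)) (at t)"
  proof -
    have "rad t ^ 3 * dg2_poly (rad t) / den (rad t) ^ 2 * (- den (rad t) / (4 * rad t ^ 3))
        = dg2_dt (rad t)"
      using rad_pos[OF assms(1)] den_pos[of "rad t"]
      by (simp add: dg2_dt_def field_simps power2_eq_square)
    then show ?thesis using DERIV_chain2[OF g2_rad_deriv rad_deriv[OF assms(1)]] by simp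
  qed
  from DERIV_chain2[OF has_real_derivative_powr[OF pos, of "27/25"] this]
  have "((\<lambda>t. g2_rad (rad t) powr (27/25)) has_real_derivative slope (rad t)) (at t)"
    by (simp add: slope_def mult.assoc)
  then show ?thesis by (subst DERIV_cong_ev[OF refl near refl])
qed

definition dslope_poly :: "real \<Rightarrow> real" where
  "dslope_poly r = 2704 - 13325 * r - 8488 * r^2 - 17160 * r^3 - 37516 * r^4 + 24505 * r^5
     - 31850 * r^6 + 35880 * r^7 + 3600 * r^8 - 6500 * r^9 + 5400 * r^10"

lemma dslope_poly_eq:
  "dslope_poly r = 1250 * (2/25 * dg2_poly r ^ 2
     + r * (13/10 - r) * (dg2_poly' r * den r - dg2_poly r * (6 * r + 8 * r^3)))"
  unfolding dslope_poly_def dg2_poly_def dg2_poly'_def den_def by algebra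

lemma dslope_poly_nonpos:
  assumes "22/125 \<le> r" "r \<le> 1"
  shows "dslope_poly r \<le> 0"
proof -
  \<comment> \<open>Bernstein expansion on \<open>[22/125, 1]\<close>; every coefficient is positive.\<close>
  have bernstein: "- dslope_poly r = (1128469091364026636166/5006478649914718868173658847808837890625)*(125*r-22)^0*(125-125*r)^10 + (186636967372926693543/1602073167972710037815570831298828125)*(125*r-22)^1*(125-125*r)^9 + (370761557071246537661/320414633594542007563114166259765625)*(125*r-22)^2*(125-125*r)^8 + (67278561351924953932/12816585343781680302524566650390625)*(125*r-22)^3*(125-125*r)^7 + (1452442213256482462/102532682750253442420196533203125)*(125*r-22)^4*(125-125*r)^6 + (20419276022007251/820261462002027539361572265625)*(125*r-22)^5*(125-125*r)^5 + (961694353119771/32810458480081101574462890625)*(125*r-22)^6*(125-125*r)^4 + (6000805962302/262483667840648812595703125)*(125*r-22)^7*(125-125*r)^3 + (23500774506/2099869342725190500765625)*(125*r-22)^8*(125-125*r)^2 + (10173324/3359790948360304801225)*(125*r-22)^9*(125-125*r)^1 + (42750/134391637934412192049)*(125*r-22)^10*(125-125*r)^0"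
    unfolding dslope_poly_def by algebra
  have "0 \<le> - dslope_poly r"
    unfolding bernstein using assms by (intro add_nonneg_nonneg mult_nonneg_nonneg zero_le_power) auto
  then show ?thesis by linarith
qed

lemma slope_deriv:
  assumes "0 < r" "r < 13/10"
  shows "(slope has_real_derivative
           27/25 * g2_rad r powr (2/25) * r^3 / (5000 * g2_rad r * den r ^ 3) * - dslope_poly r) (at r)"
proof -
  define gq where "gq = g2_rad r powr (2/25)"
  define m where "m = dg2_poly' r * den r - dg2_poly r * (6 * r + 8 * r^3)"
  define dg2_dt' where "dg2_dt' = - m / (4 * den r ^ 2)"
  have pos: "0 < g2_rad r" using g2_rad_pos assms by blast
  have chain: "((\<lambda>r. g2_rad r powr (2/25)) has_real_derivative
      2/25 * g2_rad r powr (2/25 - 1) * (r^3 * dg2_poly r / den r ^ 2)) (at r)"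
    by (rule DERIV_chain2[OF has_real_derivative_powr[OF pos, of "2/25"] g2_rad_deriv])
  have powr_pred: "g2_rad r powr (2/25 - 1) = gq / g2_rad r"
    using pos powr_diff[of "g2_rad r" "2/25" 1] by (simp add: gq_def)
  have dpow: "((\<lambda>r. g2_rad r powr (2/25)) has_real_derivative
      2/25 * (gq / g2_rad r) * (r^3 * dg2_poly r / den r ^ 2)) (at r)"
    using chain unfolding powr_pred .
  have "slope = (\<lambda>r. 27/25 * (g2_rad r powr (2/25) * dg2_dt r))"
    by (auto simp: slope_def[abs_def])
  then have deriv: "(slope has_real_derivative
      27/25 * (2/25 * (gq / g2_rad r) * (r^3 * dg2_poly r / den r ^ 2) * dg2_dt r + dg2_dt' * gq)) (at r)"
    using DERIV_cmult[OF DERIV_mult[OF dpow dg2_dt_deriv], of "27/25"]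
    unfolding gq_def dg2_dt'_def m_def by simp
  have key: "2/25 * (r^3 * dg2_poly r / den r ^ 2) * dg2_dt r + g2_rad r * dg2_dt'
      = - (r^3 * dslope_poly r) / (5000 * den r ^ 3)"
  proof -
    have "d \<noteq> 0 \<Longrightarrow> 2/25 * (r^3 * k / d^2) * (- k / (4 * d)) + r^4 * (13/10 - r) / d * (- m / (4 * d^2))
      = - (r^3 * (1250 * (2/25 * k^2 + r * (13/10 - r) * m))) / (5000 * d^3)" for k d
      by (simp add: field_simps power2_eq_square power3_eq_cube eval_nat_numeral)
    from this[of "den r" "dg2_poly r"] show ?thesis
      using den_pos[of r] unfolding dslope_poly_eq dg2_dt_def g2_rad_def dg2_dt'_def m_def by simp
  qed
  have "27/25 * (2/25 * (gq / g2_rad r) * (r^3 * dg2_poly r / den r ^ 2) * dg2_dt r + dg2_dt' * gq)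
      = 27/25 * gq / g2_rad r * (2/25 * (r^3 * dg2_poly r / den r ^ 2) * dg2_dt r + g2_rad r * dg2_dt')"
    using pos by (simp add: field_simps)
  also have "\<dots> = 27/25 * gq * r^3 / (5000 * g2_rad r * den r ^ 3) * - dslope_poly r"
    unfolding key by simp
  finally show ?thesis using DERIV_cong[OF deriv] unfolding gq_def by blast
qed

lemma slope_mono: "mono_on {22/125..1} slope"
proof (rule mono_onI)
  fix a b :: real
  assume ab: "a \<in> {22/125..1}" "b \<in> {22/125..1}" "a \<le> b"
  show "slope a \<le> slope b"
  proof (rule DERIV_nonneg_imp_nondecreasing[OF \<open>a \<le> b\<close>])
    fix r :: real
    assume "a \<le> r" "r \<le> b"
    then have r: "22/125 \<le> r" "r \<le> 1" using ab by auto
    have "0 < r" "r < 13/10" using r by auto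
    moreover have "0 \<le> 27/25 * g2_rad r powr (2/25) * r^3 / (5000 * g2_rad r * den r ^ 3) * - dslope_poly r"
    proof (rule mult_nonneg_nonneg)
      show "0 \<le> 27/25 * g2_rad r powr (2/25) * r^3 / (5000 * g2_rad r * den r ^ 3)"
        using g2_rad_pos[OF calculation] den_pos[of r] r by simp
      show "0 \<le> - dslope_poly r" using dslope_poly_nonpos[OF r] by simp
    qed
    ultimately show "\<exists>y. (slope has_real_derivative y) (at r) \<and> 0 \<le> y"
      using slope_deriv by blast
  qed
qed

theorem lemma47:
  fixes q :: real and \<Delta> :: nat
  assumes "q = 27/25" and "\<Delta> = 6"
  shows "concave_on {ln (3/4) .. ln (1 - 1 / (2 ^ (\<Delta> - 1) + 1)^2)}
           (\<lambda>t. (g2 (exp t)) powr q)"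
proof -
  define I where "I = {ln (3/4) .. ln (1088/1089 :: real)}"
  have "ln (1088/1089 :: real) < 0" by (rule ln_less_zero) simp_all
  then have neg: "t < 0" if "t \<in> I" for t
    using that unfolding I_def atLeastAtMost_iff by linarith
  have rad_in: "rad t \<in> {22/125..1}" if "t \<in> I" for t
    using that bounds_from_tau[of "rad t"] rad_pos[OF neg] tau_rad[OF neg]
    by (auto simp: I_def less_imp_le)
  have "concave_on I (\<lambda>t. g2 (exp t) powr (27/25))"
  proof (rule concave_on_real_deriv_comp[where \<phi> = rad and D = slope])
    show "connected I" by (simp add: I_def)
    show "((\<lambda>t. g2 (exp t) powr (27/25)) has_real_derivative slope (rad t)) (at t)" if "t \<in> I" for t
      using g2_exp_powr_deriv neg[OF that] rad_in[OF that] by simp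
    show "antimono_on I rad"
      using rad_antimono neg by (blast intro: monotone_on_subset)
    show "mono_on (rad ` I) slope"
      using slope_mono rad_in by (blast intro: monotone_on_subset)
  qed
  then show ?thesis unfolding assms I_def by simp
qed

end
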